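(* Let $X$ be a metric space and $\tau\in\mathrm{Fin}\,\mathbb N\cup\{\emptyset\}$ such that $\operatorname{Ord}A(X)^\tau=\alpha$ for some ordinal number $\alpha$. Then for each ordinal $\xi\le\alpha$ there exists $\sigma\in\mathrm{Fin}\,\mathbb N\cup\{\emptyset\}$ such that $\operatorname{Ord}A(X)^{\tau\cup\sigma}=\xi$.
   Context: A family $\mathcal A$ of subsets of a metric space is uniformly bounded if there is $C>0$ with $\operatorname{diam}A\le C$ for all $A\in\mathcal A$; it is $r$-disjoint if $d(A_1,A_2)\ge r$ for all distinct $A_1,A_2\in\mathcal A$. For a set $L$, $\mathrm{Fin}\,L$ is the collection of finite nonempty subsets of $L$. For $M\subset \mathrm{Fin}\,L$ and $\sigma\in\{\emptyset\}\cup\mathrm{Fin}\,L$, $M^\sigma=\{\tau\in\mathrm{Fin}\,L:\sigma\cup\tau\in M,\ \sigma\cap\tau=\emptyset\}$, and $M^a=M^{\{a\}}$. The ordinal $\operatorname{Ord}M$: $\operatorname{Ord}M=0$ iff $M=\emptyset$; $\operatorname{Ord}M\le\alpha$ iff $\operatorname{Ord}M^a<\alpha$ for every $a\in L$; $\operatorname{Ord}M=\alpha$ iff $\operatorname{Ord}M\le\alpha$ and not $\operatorname{Ord}M<\alpha$; $\operatorname{Ord}M=\infty$ iff $\operatorname{Ord} M\le\alpha$ for no ordinal $\alpha$. For a metric space $X$, $A(X)$ is the set of $\sigma\in\mathrm{Fin}\,\mathbb N$ such that there do NOT exist uniformly bounded families $\mathcal V_i$, $i\in\sigma$, with $\bigcup_{i\in\sigma}\mathcal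 V_i$ covering $X$ and each $\mathcal V_i$ being $i$-disjoint; here $L=\mathbb N$. *)

theory Defs
  imports "HOL-Analysis.Analysis"
begin

definition unif_bounded :: "('a \<Rightarrow> 'a \<Rightarrow> real) \<Rightarrow> 'a set set \<Rightarrow> bool" where
  "unif_bounded d \<V> \<longleftrightarrow> (\<exists>C>0. \<forall>A\<in>\<V>. \<forall>x\<in>A. \<forall>y\<in>A. d x y \<le> C)"

definition r_disjoint :: "('a \<Rightarrow> 'a \<Rightarrow> real) \<Rightarrow> real \<Rightarrow> 'a set set \<Rightarrow> bool" where
  "r_disjoint d r \<V> \<longleftrightarrow>
     (\<forall>A1\<in>\<V>. \<forall>A2\<in>\<V>. A1 \<noteq> A2 \<longrightarrow> (\<forall>x\<in>A1. \<forall>y\<in>A2. r \<le> d x y))"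

definition Fin :: "'b set \<Rightarrow> 'b set set" where
  "Fin L = {\<sigma>. finite \<sigma> \<and> \<sigma> \<noteq> {} \<and> \<sigma> \<subseteq> L}"

definition restr :: "'b set \<Rightarrow> 'b set set \<Rightarrow> 'b set \<Rightarrow> 'b set set" where
  "restr L M \<sigma> = {\<tau> \<in> Fin L. \<sigma> \<union> \<tau> \<in> M \<and> \<sigma> \<inter> \<tau> = {}}"

text \<open>ord_le L M \<alpha> means Ord M \<le> \<alpha>, where ordinals are represented by elements of
  an arbitrary well-ordered type.\<close>

inductive ord_le :: "'b set \<Rightarrow> 'b set set \<Rightarrow> 'o::wellorder \<Rightarrow> bool" for L where
  empty: "M = {} \<Longrightarrow> ord_le L M \<alpha>"
| step: "(\<forall>a\<in>L. \<exists>\<beta><\<alpha>. ord_le L (restr L M {a}) \<beta>) \<Longrightarrow> ord_le L M \<alpha>"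

definition ord_eq :: "'b set \<Rightarrow> 'b set set \<Rightarrow> 'o::wellorder \<Rightarrow> bool" where
  "ord_eq L M \<alpha> \<longleftrightarrow> ord_le L M \<alpha> \<and> \<not> (\<exists>\<beta><\<alpha>. ord_le L M \<beta>)"

definition Nat1 :: "nat set" where "Nat1 = {1..}"

definition AX :: "'a set \<Rightarrow> ('a \<Rightarrow> 'a \<Rightarrow> real) \<Rightarrow> nat set set" where
  "AX X d = {\<sigma> \<in> Fin Nat1. \<not> (\<exists>\<V> :: nat \<Rightarrow> 'a set set.
       (\<forall>i\<in>\<sigma>. \<V> i \<subseteq> Pow X \<and> unif_bounded d (\<V> i) \<and> r_disjoint d (real i) (\<V> i))
       \<and> X \<subseteq> (\<Union>i\<in>\<sigma>. \<Union>(\<V> i)))}"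

end

theory Submission
  imports Defs
begin

text \<open>Only the combinatorics of \<open>Ord\<close> matters: the statement holds for every family \<open>M\<close> of
  finite subsets of an infinite index set \<open>L\<close>.  By induction on \<open>\<alpha> = Ord M^\<tau>\<close>: given
  \<open>\<xi> < \<alpha>\<close>, the failure of \<open>Ord M^\<tau> \<le> \<xi>\<close> yields an index \<open>a \<notin> \<tau>\<close> with
  \<open>\<xi> \<le> Ord M^(\<tau> \<union> {a}) < \<alpha>\<close>, and the induction hypothesis applies to \<open>\<tau> \<union> {a}\<close>.\<close>

lemma restr_singleton_restr:
  assumes "a \<in> L" "a \<notin> \<tau>"
  shows "restr L (restr L M \<tau>) {a} = restr L M (insert a \<tau>)"
  using assms unfolding restr_def Fin_def by auto

lemma restr_singleton_restr_mem:
  assumes "a \<in> \<tau>"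
  shows "restr L (restr L M \<tau>) {a} = {}"
  using assms unfolding restr_def by auto

lemma ord_le_restr_singleton:
  assumes "ord_le L M \<alpha>" "M \<noteq> {}" "a \<in> L"
  shows "\<exists>\<beta><\<alpha>. ord_le L (restr L M {a}) \<beta>"
  using assms(1)
proof cases
  case step
  then show ?thesis using assms(3) by blast
qed (use assms(2) in simp)

lemma ord_le_imp_ord_eq_le:
  fixes \<beta> :: "'o::wellorder"
  assumes "ord_le L M \<beta>"
  shows "\<exists>\<gamma>\<le>\<beta>. ord_eq L M \<gamma>"
proof (intro exI conjI)
  let ?\<gamma> = "LEAST \<gamma>::'o. ord_le L M \<gamma>"
  show "?\<gamma> \<le> \<beta>" using assms by (rule Least_le)
  show "ord_eq L M ?\<gamma>"
    unfolding ord_eq_def using assms by (meson LeastI not_less_Least)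
qed

lemma empty_or_Fin_iff: "\<sigma> = {} \<or> \<sigma> \<in> Fin L \<longleftrightarrow> finite \<sigma> \<and> \<sigma> \<subseteq> L"
  unfolding Fin_def by auto

lemma ord_eq_restr_step_down:
  fixes \<alpha> \<xi> :: "'o::wellorder"
  assumes "infinite L" "finite \<tau>" "\<tau> \<subseteq> L"
    and "ord_eq L (restr L M \<tau>) \<alpha>" "\<xi> < \<alpha>"
  obtains a \<beta> where "a \<in> L" "a \<notin> \<tau>" "\<xi> \<le> \<beta>" "\<beta> < \<alpha>"
    "ord_eq L (restr L M (insert a \<tau>)) \<beta>"
proof -
  let ?M = "restr L M \<tau>"
  have le_\<alpha>: "ord_le L ?M \<alpha>" and not_le_\<xi>: "\<not> ord_le L ?M \<xi>"
    using assms(4,5) unfolding ord_eq_def by blast+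
  obtain a where a: "a \<in> L" "a \<notin> \<tau>" "\<forall>\<beta><\<xi>. \<not> ord_le L (restr L ?M {a}) \<beta>"
  proof (cases "\<exists>\<beta>. \<beta> < \<xi>")
    case True
    have "\<not> (\<forall>a\<in>L. \<exists>\<beta><\<xi>. ord_le L (restr L ?M {a}) \<beta>)"
      using not_le_\<xi> ord_le.step[where M = ?M and \<alpha> = \<xi>] by blast
    then obtain a where a: "a \<in> L" "\<forall>\<beta><\<xi>. \<not> ord_le L (restr L ?M {a}) \<beta>"
      by blast
    have "a \<notin> \<tau>"
    proof
      assume "a \<in> \<tau>"
      then have "ord_le L (restr L ?M {a}) \<beta>" for \<beta> :: 'o
        by (simp add: restr_singleton_restr_mem ord_le.empty)
      with True a(2) show False by blast
    qed
    with a that show ?thesis by blast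
  next
    case False
    have "infinite (L - \<tau>)" using assms(1,2) by (rule Diff_infinite_finite[rotated])
    then obtain a where "a \<in> L - \<tau>" using infinite_imp_nonempty by blast
    with False that show ?thesis by blast
  qed
  have "?M \<noteq> {}" using not_le_\<xi> ord_le.empty by blast
  then obtain \<beta> where "\<beta> < \<alpha>" "ord_le L (restr L ?M {a}) \<beta>"
    using ord_le_restr_singleton[OF le_\<alpha> _ a(1)] by blast
  then obtain \<gamma> where "\<gamma> < \<alpha>" and eq_\<gamma>: "ord_eq L (restr L ?M {a}) \<gamma>"
    using ord_le_imp_ord_eq_le le_less_trans by blast
  moreover have "\<xi> \<le> \<gamma>"
    using a(3) eq_\<gamma> unfolding ord_eq_def by (meson not_le)
  ultimately show ?thesis
    using that a(1,2) restr_singleton_restr[OF a(1,2)] by simp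
qed

lemma ord_eq_restr_attains_below:
  fixes \<alpha> \<xi> :: "'o::wellorder"
  assumes "infinite L" "finite \<tau>" "\<tau> \<subseteq> L"
    and "ord_eq L (restr L M \<tau>) \<alpha>" "\<xi> \<le> \<alpha>"
  shows "\<exists>\<sigma>. finite \<sigma> \<and> \<sigma> \<subseteq> L \<and> ord_eq L (restr L M (\<tau> \<union> \<sigma>)) \<xi>"
  using assms(2-5)
proof (induction \<alpha> arbitrary: \<tau> rule: less_induct)
  case (less \<alpha>)
  show ?case
  proof (cases "\<xi> = \<alpha>")
    case True
    with less.prems(3) show ?thesis by (intro exI[of _ "{}"]) simp
  next
    case False
    with less.prems(4) have "\<xi> < \<alpha>" by simp
    with assms(1) less.prems(1-3) obtain a \<beta> where
      a: "a \<in> L" "a \<notin> \<tau>" and \<beta>: "\<xi> \<le> \<beta>" "\<beta> < \<alpha>"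
      and eq_\<beta>: "ord_eq L (restr L M (insert a \<tau>)) \<beta>"
      by (rule ord_eq_restr_step_down)
    from less.IH[OF \<beta>(2) _ _ eq_\<beta> \<beta>(1)] less.prems(1,2) a(1) obtain \<sigma> where
      "finite \<sigma>" "\<sigma> \<subseteq> L" "ord_eq L (restr L M (insert a \<tau> \<union> \<sigma>)) \<xi>"
      by auto
    with a(1) show ?thesis by (intro exI[of _ "insert a \<sigma>"]) simp
  qed
qed

theorem lemma5:
  fixes X :: "'a set" and d :: "'a \<Rightarrow> 'a \<Rightarrow> real"
    and \<tau> :: "nat set" and \<alpha> :: "'o::wellorder"
  assumes "Metric_space X d"
    and "\<tau> = {} \<or> \<tau> \<in> Fin Nat1"
    and "ord_eq Nat1 (restr Nat1 (AX X d) \<tau>) \<alpha>"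
  shows "\<forall>\<xi>\<le>\<alpha>. \<exists>\<sigma>. (\<sigma> = {} \<or> \<sigma> \<in> Fin Nat1) \<and>
           ord_eq Nat1 (restr Nat1 (AX X d) (\<tau> \<union> \<sigma>)) \<xi>"
proof (intro allI impI)
  fix \<xi> :: 'o
  assume "\<xi> \<le> \<alpha>"
  have "infinite Nat1" unfolding Nat1_def by (rule infinite_Ici)
  moreover have "finite \<tau>" "\<tau> \<subseteq> Nat1"
    using assms(2) unfolding empty_or_Fin_iff by blast+
  ultimately obtain \<sigma> where "finite \<sigma>" "\<sigma> \<subseteq> Nat1"
    "ord_eq Nat1 (restr Nat1 (AX X d) (\<tau> \<union> \<sigma>)) \<xi>"
    using ord_eq_restr_attains_below[OF _ _ _ assms(3) \<open>\<xi> \<le> \<alpha>\<close>] by blast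
  then show "\<exists>\<sigma>. (\<sigma> = {} \<or> \<sigma> \<in> Fin Nat1) \<and>
      ord_eq Nat1 (restr Nat1 (AX X d) (\<tau> \<union> \<sigma>)) \<xi>"
    unfolding empty_or_Fin_iff by blast
qed

end
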